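(* Let $\succeq$ be a complete and transitive preference relation on $\mathcal{L}$ that is continuous with respect to convergence in probability, satisfies state-wise monotonicity, and is regret based. Then (i) $\succeq$ is monotonic with respect to first-order stochastic dominance: for $X,Y\in\mathcal{L}$, if $F_X$ strictly dominates $F_Y$ by first-order stochastic dominance (i.e., $F_X(t)\leqslant F_Y(t)$ for all $t$ and $F_X\neq F_Y$), then $X\succ Y$; and (ii) $\succeq$ is continuous with respect to convergence in distribution: whenever $X^k,X,Y\in\mathcal{L}$ and $X^k\to X$ in distribution, $X^k\succeq Y$ for all $k$ implies $X\succeq Y$, and $Y\succeq X^k$ for all $k$ implies $Y\succeq X$.
   Context: Fix a bounded interval of outcomes $[\underline x,\bar x]\subset\mathbb{R}$. Let $(S,\Sigma,\mathrm{P})$ be the probability space with $S=[0,1]$, $\Sigma$ the Borel $\sigma$-algebra on $[0,1]$, and $\mathrm{P}$ Lebesgue measure. $\mathcal{L}$ is the set of measurable random variables $X:S\to[\underline x,\bar x]$ taking only finitely many values; such $X$ is written $X=(x_1,S_1;\ldots;x_n,S_n)$, meaning $X=x_i$ on the event $S_i$, where $S_1,\ldots,S_n$ is a measurable partition of $S$. $F_X$ denotes the cdf of $X$. A preference relation $\succeq$ on $\mathcal{L}$ is a binary relation; $\succ$ and $\sim$ are its strict and indifference parts. A regret function is a continuous $\psi:[\underline x,\bar x]\times[\underline x,\bar x]\to\mathbb{R}$ with $\psi(x,x)=0$ for all $x$, $\psi(x,y)$ strictly increasing in $x$ and strictly decreasing in $y$. For $X=(x_1,S_1;\ldots;x_n,S_n)$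 and $Y=(y_1,S_1;\ldots;y_n,S_n)$ written on a common partition, the regret lottery is the finite-support lottery $\Psi(X,Y)=(\psi(x_1,y_1),p_1;\ldots;\psi(x_n,y_n),p_n)$ with $p_i=\mathrm{P}(S_i)$ (i.e., the distribution of $s\mapsto\psi(X(s),Y(s))$). The relation $\succeq$ is regret based if there exist a regret function $\psi$ and a continuous real-valued functional $V$ defined on the set of regret lotteries $\{\Psi(X,Y):X,Y\in\mathcal{L}\}$ such that for all $X,Y\in\mathcal{L}$: $X\succeq Y$ iff $V(\Psi(X,Y))\geqslant 0$. A sequence $X^k\in\mathcal{L}$ converges in probability to $X\in\mathcal{L}$ if for every $\varepsilon>0$, $\lim_{k\to\infty}\mathrm{P}(|X^k-X|\geqslant\varepsilon)=0$. $\succeq$ is continuous with respect to convergence in probability if, whenever $X^k\to X$ in probability: $X^k\succeq Y$ for all $k$ implies $X\succeq Y$, and $Y\succeq X^k$ for all $k$ implies $Y\succeq X$. $X^k$ converges in distribution to $X$ if $\lim_{k\to\infty}F_{X^k}(x)=F_X(x)$ at every $x$ at which $F_X$ is continuous. $\succeq$ satisfies state-wise monotonicity if for any measurable partition $S_1,\ldots,S_n$ of $S$ and any $X=(x_1,S_1;\ldots;x_n,S_n)$, $Y=(y_1,S_1;\ldots;y_n,S_n)$ with $x_i\geqslant y_i$ for all $i$ and at least one strict inequality, $X\succ Y$. *)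

theory Defs
  imports "HOL-Probability.Probability"
begin

definition PS :: "real measure" where
  "PS = restrict_space lborel {0..1}"

definition simpleL :: "real \<Rightarrow> real \<Rightarrow> (real \<Rightarrow> real) set" where
  "simpleL xl xu = {X. X \<in> borel_measurable PS \<and> X ` space PS \<subseteq> {xl..xu}
                        \<and> finite (X ` space PS)}"

definition law :: "(real \<Rightarrow> real) \<Rightarrow> real measure" where
  "law X = distr PS borel X"

definition strict_pref :: "('a \<Rightarrow> 'a \<Rightarrow> bool) \<Rightarrow> 'a \<Rightarrow> 'a \<Rightarrow> bool" where
  "strict_pref R X Y \<longleftrightarrow> R X Y \<and> \<not> R Y X"

definition complete_on :: "'a set \<Rightarrow> ('a \<Rightarrow> 'a \<Rightarrow> bool) \<Rightarrow> bool" where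
  "complete_on A R \<longleftrightarrow> (\<forall>X\<in>A. \<forall>Y\<in>A. R X Y \<or> R Y X)"

definition transitive_on :: "'a set \<Rightarrow> ('a \<Rightarrow> 'a \<Rightarrow> bool) \<Rightarrow> bool" where
  "transitive_on A R \<longleftrightarrow> (\<forall>X\<in>A. \<forall>Y\<in>A. \<forall>Z\<in>A. R X Y \<longrightarrow> R Y Z \<longrightarrow> R X Z)"

definition conv_in_prob :: "(nat \<Rightarrow> real \<Rightarrow> real) \<Rightarrow> (real \<Rightarrow> real) \<Rightarrow> bool" where
  "conv_in_prob Xs X \<longleftrightarrow>
     (\<forall>e>0. (\<lambda>k. measure PS {s \<in> space PS. \<bar>Xs k s - X s\<bar> \<ge> e}) \<longlonglongrightarrow> 0)"

definition conv_in_dist :: "(nat \<Rightarrow> real \<Rightarrow> real) \<Rightarrow> (real \<Rightarrow> real) \<Rightarrow> bool" where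
  "conv_in_dist Xs X \<longleftrightarrow> weak_conv_m (\<lambda>k. law (Xs k)) (law X)"

definition cont_prob_pref :: "real \<Rightarrow> real \<Rightarrow> ((real \<Rightarrow> real) \<Rightarrow> (real \<Rightarrow> real) \<Rightarrow> bool) \<Rightarrow> bool" where
  "cont_prob_pref xl xu R \<longleftrightarrow>
     (\<forall>Xs X Y. (\<forall>k. Xs k \<in> simpleL xl xu) \<longrightarrow> X \<in> simpleL xl xu \<longrightarrow> Y \<in> simpleL xl xu \<longrightarrow>
        conv_in_prob Xs X \<longrightarrow>
        ((\<forall>k. R (Xs k) Y) \<longrightarrow> R X Y) \<and> ((\<forall>k. R Y (Xs k)) \<longrightarrow> R Y X))"

definition cont_dist_pref :: "real \<Rightarrow> real \<Rightarrow> ((real \<Rightarrow> real) \<Rightarrow> (real \<Rightarrow> real) \<Rightarrow> bool) \<Rightarrow> bool" where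
  "cont_dist_pref xl xu R \<longleftrightarrow>
     (\<forall>Xs X Y. (\<forall>k. Xs k \<in> simpleL xl xu) \<longrightarrow> X \<in> simpleL xl xu \<longrightarrow> Y \<in> simpleL xl xu \<longrightarrow>
        conv_in_dist Xs X \<longrightarrow>
        ((\<forall>k. R (Xs k) Y) \<longrightarrow> R X Y) \<and> ((\<forall>k. R Y (Xs k)) \<longrightarrow> R Y X))"

text \<open>State-wise monotonicity (X, Y written on a common finite partition with x_i >= y_i for
  all cells and strict inequality on some cell of positive probability).\<close>
definition statewise_monotone :: "real \<Rightarrow> real \<Rightarrow> ((real \<Rightarrow> real) \<Rightarrow> (real \<Rightarrow> real) \<Rightarrow> bool) \<Rightarrow> bool" where
  "statewise_monotone xl xu R \<longleftrightarrow>
     (\<forall>X\<in>simpleL xl xu. \<forall>Y\<in>simpleL xl xu.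
        (\<forall>s\<in>space PS. Y s \<le> X s) \<and> measure PS {s \<in> space PS. Y s < X s} > 0
        \<longrightarrow> strict_pref R X Y)"

definition regret_function :: "real \<Rightarrow> real \<Rightarrow> (real \<Rightarrow> real \<Rightarrow> real) \<Rightarrow> bool" where
  "regret_function xl xu \<psi> \<longleftrightarrow>
     continuous_on ({xl..xu} \<times> {xl..xu}) (\<lambda>(x, y). \<psi> x y) \<and>
     (\<forall>x\<in>{xl..xu}. \<psi> x x = 0) \<and>
     (\<forall>y\<in>{xl..xu}. \<forall>x\<in>{xl..xu}. \<forall>x'\<in>{xl..xu}. x < x' \<longrightarrow> \<psi> x y < \<psi> x' y) \<and>
     (\<forall>x\<in>{xl..xu}. \<forall>y\<in>{xl..xu}. \<forall>y'\<in>{xl..xu}. y < y' \<longrightarrow> \<psi> x y' < \<psi> x y)"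

definition regret_lottery :: "(real \<Rightarrow> real \<Rightarrow> real) \<Rightarrow> (real \<Rightarrow> real) \<Rightarrow> (real \<Rightarrow> real) \<Rightarrow> real measure" where
  "regret_lottery \<psi> X Y = distr PS borel (\<lambda>s. \<psi> (X s) (Y s))"

definition regret_lotteries :: "real \<Rightarrow> real \<Rightarrow> (real \<Rightarrow> real \<Rightarrow> real) \<Rightarrow> real measure set" where
  "regret_lotteries xl xu \<psi> = {regret_lottery \<psi> X Y | X Y. X \<in> simpleL xl xu \<and> Y \<in> simpleL xl xu}"

definition continuous_functional_on :: "real measure set \<Rightarrow> (real measure \<Rightarrow> real) \<Rightarrow> bool" where
  "continuous_functional_on A V \<longleftrightarrow>
     (\<forall>Ms M. (\<forall>k. Ms k \<in> A) \<longrightarrow> M \<in> A \<longrightarrow> weak_conv_m Ms M \<longrightarrow> (\<lambda>k. V (Ms k)) \<longlonglongrightarrow> V M)"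

definition regret_based :: "real \<Rightarrow> real \<Rightarrow> ((real \<Rightarrow> real) \<Rightarrow> (real \<Rightarrow> real) \<Rightarrow> bool) \<Rightarrow> bool" where
  "regret_based xl xu R \<longleftrightarrow>
     (\<exists>\<psi> V. regret_function xl xu \<psi> \<and> continuous_functional_on (regret_lotteries xl xu \<psi>) V \<and>
        (\<forall>X\<in>simpleL xl xu. \<forall>Y\<in>simpleL xl xu. R X Y \<longleftrightarrow> V (regret_lottery \<psi> X Y) \<ge> 0))"

definition strict_fosd :: "(real \<Rightarrow> real) \<Rightarrow> (real \<Rightarrow> real) \<Rightarrow> bool" where
  "strict_fosd X Y \<longleftrightarrow> (\<forall>t. cdf (law X) t \<le> cdf (law Y) t) \<and> cdf (law X) \<noteq> cdf (law Y)"

end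

theory Submission
  imports Defs
begin

(* A complete, transitive, regret-based relation is indifferent between any two lotteries with
   the same law. Indeed, let Z be a copy of X independent of (X, Y), built by feeding the
   relative position of the state within its cell of (X, Y) into the quantile function of X.
   Then (X, Z) and (Y, Z) are exchangeable pairs, so psi(X, Z) and psi(Z, X) have the same
   distribution and X ~ Z; likewise Y ~ Z.

   In particular every X is indifferent to its quantile representation s |-> F_X^-1(s) on
   [0,1]. Quantile representations turn strict first-order stochastic dominance into
   state-wise dominance that is strict on an interval of positive length, and convergence in
   distribution into convergence almost everywhere, hence in probability. State-wise
   monotonicity and continuity in probability then transfer back along the indifferences. *)

section \<open>The state space\<close>

lemma space_PS: "space PS = {0..1}"
  by (simp add: PS_def)

lemma sets_PS: "A \<in> sets PS \<longleftrightarrow> A \<in> sets borel \<and> A \<subseteq> {0..1}"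
  unfolding PS_def by (subst sets_restrict_space_iff) auto

lemma emeasure_PS: "A \<subseteq> {0..1} \<Longrightarrow> emeasure PS A = emeasure lborel A"
  unfolding PS_def by (rule emeasure_restrict_space) auto

lemma measure_PS: "A \<subseteq> {0..1} \<Longrightarrow> measure PS A = measure lborel A"
  unfolding PS_def by (rule measure_restrict_space) auto

interpretation PS: prob_space PS
  by (rule prob_spaceI) (simp add: emeasure_PS space_PS)

lemma borel_measurable_PS: "f \<in> borel_measurable borel \<Longrightarrow> f \<in> borel_measurable PS"
  unfolding PS_def by (rule measurable_restrict_space1) simp

lemma borel_measurable_frac_PS: "frac \<in> borel_measurable PS"
  unfolding frac_def by (intro borel_measurable_PS) measurable

lemma finite_null_sets_PS: "finite N \<Longrightarrow> N \<subseteq> {0..1} \<Longrightarrow> N \<in> null_sets PS"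
  using countable_imp_null_set_lborel[OF countable_finite, of N]
  by (auto simp: null_sets_def sets_PS emeasure_PS)

lemma measure_PS_atLeastLessThan:
  "0 \<le> a \<Longrightarrow> a \<le> b \<Longrightarrow> b \<le> 1 \<Longrightarrow> measure PS {a..<b} = b - a"
  by (subst measure_PS) auto

lemma measure_PS_atLeastAtMost:
  "0 \<le> a \<Longrightarrow> a \<le> b \<Longrightarrow> b \<le> 1 \<Longrightarrow> measure PS {a..b} = b - a"
  by (subst measure_PS) auto

section \<open>Finite random variables and regret lotteries\<close>

definition finite_rv :: "(real \<Rightarrow> real) \<Rightarrow> bool" where
  "finite_rv X \<longleftrightarrow> X \<in> borel_measurable PS \<and> finite (X ` space PS)"

lemma simpleL_finite_rv: "X \<in> simpleL xl xu \<Longrightarrow> finite_rv X"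
  by (simp add: simpleL_def finite_rv_def)

lemma sets_PS_pair_eq:
  fixes X Y :: "real \<Rightarrow> real"
  assumes "X \<in> borel_measurable PS" "Y \<in> borel_measurable PS"
  shows "{s\<in>space PS. (X s, Y s) = p} \<in> sets PS"
proof -
  have "{s\<in>space PS. (X s, Y s) = p} = (X -` {fst p} \<inter> space PS) \<inter> (Y -` {snd p} \<inter> space PS)"
    by (cases p) auto
  also have "\<dots> \<in> sets PS"
    by (rule sets.Int[OF measurable_sets[OF assms(1)] measurable_sets[OF assms(2)]])
      simp_all
  finally show ?thesis .
qed

lemma finite_rv_pair_sets:
  assumes "finite_rv X" "finite_rv Y"
  shows "{s\<in>space PS. P (X s) (Y s)} \<in> sets PS"
proof -
  have "{s\<in>space PS. P (X s) (Y s)} =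
      (\<Union>p\<in>{p \<in> X ` space PS \<times> Y ` space PS. P (fst p) (snd p)}. {s\<in>space PS. (X s, Y s) = p})"
    by auto
  also have "\<dots> \<in> sets PS"
    using assms by (intro sets.finite_UN sets_PS_pair_eq) (auto simp: finite_rv_def)
  finally show ?thesis .
qed

lemma finite_rv_sets: "finite_rv X \<Longrightarrow> {s\<in>space PS. P (X s)} \<in> sets PS"
  using finite_rv_pair_sets[of X X "\<lambda>a _. P a"] by simp

lemma finite_rv_comp2_measurable:
  assumes "finite_rv X" "finite_rv Y"
  shows "(\<lambda>s. H (X s) (Y s) :: real) \<in> borel_measurable PS"
proof (rule borel_measurableI)
  fix S :: "real set"
  show "(\<lambda>s. H (X s) (Y s)) -` S \<inter> space PS \<in> sets PS"
    using finite_rv_pair_sets[OF assms, of "\<lambda>a b. H a b \<in> S"] by (simp add: Int_def conj_commute)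
qed

lemma measure_pair_split:
  fixes X Y :: "real \<Rightarrow> real"
  assumes "X \<in> borel_measurable PS" "Y \<in> borel_measurable PS" "finite W"
    "(\<lambda>s. (X s, Y s)) ` space PS \<subseteq> W" "{s\<in>space PS. P s} \<in> sets PS"
  shows "measure PS {s\<in>space PS. (X s, Y s) \<in> A \<and> P s} =
    (\<Sum>p\<in>W \<inter> A. measure PS {s\<in>space PS. (X s, Y s) = p \<and> P s})"
proof -
  have union: "{s\<in>space PS. (X s, Y s) \<in> A \<and> P s} =
      (\<Union>p\<in>W \<inter> A. {s\<in>space PS. (X s, Y s) = p \<and> P s})"
    using assms(4) by (auto simp: image_subset_iff)
  have "{s\<in>space PS. (X s, Y s) = p \<and> P s} \<in> sets PS" for p
  proof -
    have "{s\<in>space PS. (X s, Y s) = p \<and> P s} = {s\<in>space PS. (X s, Y s) = p} \<inter> {s\<in>space PS. P s}"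
      by auto
    then show ?thesis
      using sets_PS_pair_eq[OF assms(1,2)] assms(5) by auto
  qed
  then show ?thesis
    unfolding union using assms(3)
    by (intro PS.finite_measure_finite_Union) (auto simp: disjoint_family_on_def)
qed

lemma measure_pair_eq_sum:
  fixes X Y :: "real \<Rightarrow> real"
  assumes "X \<in> borel_measurable PS" "Y \<in> borel_measurable PS" "finite W"
    "(\<lambda>s. (X s, Y s)) ` space PS \<subseteq> W"
  shows "measure PS {s\<in>space PS. (X s, Y s) \<in> A} =
    (\<Sum>p\<in>W \<inter> A. measure PS {s\<in>space PS. (X s, Y s) = p})"
  using measure_pair_split[OF assms, of "\<lambda>_. True" A] by simp

lemma distr_eq_if_joint_pmf_eq:
  fixes X1 Y1 X2 Y2 :: "real \<Rightarrow> real" and H :: "real \<Rightarrow> real \<Rightarrow> real"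
  assumes rvs: "finite_rv X1" "finite_rv Y1" "finite_rv X2" "finite_rv Y2"
    and joint: "\<And>p. measure PS {s\<in>space PS. (X1 s, Y1 s) = p} =
      measure PS {s\<in>space PS. (X2 s, Y2 s) = p}"
  shows "distr PS borel (\<lambda>s. H (X1 s) (Y1 s)) = distr PS borel (\<lambda>s. H (X2 s) (Y2 s))"
proof (rule measure_eqI)
  fix A :: "real set"
  assume "A \<in> sets (distr PS borel (\<lambda>s. H (X1 s) (Y1 s)))"
  then have A: "A \<in> sets borel" by simp
  define W where "W = (X1 ` space PS \<union> X2 ` space PS) \<times> (Y1 ` space PS \<union> Y2 ` space PS)"
  have "finite W" using rvs by (simp add: W_def finite_rv_def)
  have distr_eq_sum: "emeasure (distr PS borel (\<lambda>s. H (X s) (Y s))) A =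
      ennreal (\<Sum>p\<in>W \<inter> {p. H (fst p) (snd p) \<in> A}. measure PS {s\<in>space PS. (X s, Y s) = p})"
    if "finite_rv X" "finite_rv Y" "(\<lambda>s. (X s, Y s)) ` space PS \<subseteq> W" for X Y
  proof -
    have "emeasure (distr PS borel (\<lambda>s. H (X s) (Y s))) A =
        measure PS {s\<in>space PS. (X s, Y s) \<in> {p. H (fst p) (snd p) \<in> A}}"
      using A finite_rv_comp2_measurable[OF that(1,2)]
      by (simp add: emeasure_distr PS.emeasure_eq_measure vimage_def Int_def conj_commute)
    moreover have "measure PS {s\<in>space PS. (X s, Y s) \<in> {p. H (fst p) (snd p) \<in> A}} =
        (\<Sum>p\<in>W \<inter> {p. H (fst p) (snd p) \<in> A}. measure PS {s\<in>space PS. (X s, Y s) = p})"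
      using that \<open>finite W\<close> by (intro measure_pair_eq_sum) (auto simp: finite_rv_def)
    ultimately show ?thesis by simp
  qed
  have "(\<lambda>s. (X1 s, Y1 s)) ` space PS \<subseteq> W" "(\<lambda>s. (X2 s, Y2 s)) ` space PS \<subseteq> W"
    by (auto simp: W_def)
  then show "emeasure (distr PS borel (\<lambda>s. H (X1 s) (Y1 s))) A =
      emeasure (distr PS borel (\<lambda>s. H (X2 s) (Y2 s))) A"
    using distr_eq_sum rvs joint by simp
qed simp

lemma indifferent_if_exchangeable:
  assumes "complete_on (simpleL xl xu) R" "regret_based xl xu R"
    and X: "X \<in> simpleL xl xu" and Y: "Y \<in> simpleL xl xu"
    and exchangeable: "\<And>a b. measure PS {s\<in>space PS. X s = a \<and> Y s = b} =
      measure PS {s\<in>space PS. Y s = a \<and> X s = b}"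
  shows "R X Y \<and> R Y X"
proof -
  obtain \<psi> :: "real \<Rightarrow> real \<Rightarrow> real" and V :: "real measure \<Rightarrow> real"
    where R_iff: "\<And>X Y. X \<in> simpleL xl xu \<Longrightarrow> Y \<in> simpleL xl xu \<Longrightarrow>
      R X Y \<longleftrightarrow> V (regret_lottery \<psi> X Y) \<ge> 0"
    using assms(2) unfolding regret_based_def by blast
  have "regret_lottery \<psi> X Y = regret_lottery \<psi> Y X"
    unfolding regret_lottery_def
    using X Y exchangeable
    by (intro distr_eq_if_joint_pmf_eq[of X Y Y X \<psi>]) (auto simp: simpleL_finite_rv)
  then have "R X Y \<longleftrightarrow> R Y X"
    using R_iff[OF X Y] R_iff[OF Y X] by simp
  moreover have "R X Y \<or> R Y X"
    using assms(1) X Y unfolding complete_on_def by blast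
  ultimately show ?thesis by blast
qed

section \<open>Distribution and quantile functions\<close>

definition rv_cdf :: "(real \<Rightarrow> real) \<Rightarrow> real \<Rightarrow> real" where
  "rv_cdf X t = measure PS {s\<in>space PS. X s \<le> t}"

definition rv_cdf_left :: "(real \<Rightarrow> real) \<Rightarrow> real \<Rightarrow> real" where
  "rv_cdf_left X t = measure PS {s\<in>space PS. X s < t}"

definition rv_pmf :: "(real \<Rightarrow> real) \<Rightarrow> real \<Rightarrow> real" where
  "rv_pmf X t = measure PS {s\<in>space PS. X s = t}"

lemma cdf_law_eq_rv_cdf: "X \<in> borel_measurable PS \<Longrightarrow> cdf (law X) = rv_cdf X"
proof
  fix t
  assume X: "X \<in> borel_measurable PS"
  have "cdf (law X) t = measure PS (X -` {..t} \<inter> space PS)"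
    unfolding cdf_def law_def by (rule measure_distr[OF X]) simp
  also have "X -` {..t} \<inter> space PS = {s\<in>space PS. X s \<le> t}"
    by auto
  finally show "cdf (law X) t = rv_cdf X t"
    by (simp add: rv_cdf_def)
qed

lemma rv_cdf_mono: "finite_rv X \<Longrightarrow> t \<le> t' \<Longrightarrow> rv_cdf X t \<le> rv_cdf X t'"
  unfolding rv_cdf_def by (rule PS.finite_measure_mono) (auto intro: finite_rv_sets)

lemma rv_cdf_eq_1: "finite (X ` space PS) \<Longrightarrow> Max (X ` space PS) \<le> t \<Longrightarrow> rv_cdf X t = 1"
proof -
  assume fin: "finite (X ` space PS)" and max: "Max (X ` space PS) \<le> t"
  have "X s \<le> t" if "s \<in> space PS" for s
    using Max_ge[OF fin, of "X s"] max that by force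
  then have "{s\<in>space PS. X s \<le> t} = space PS"
    by blast
  then show ?thesis
    by (simp add: rv_cdf_def PS.prob_space)
qed

lemma rv_pmf_eq_rv_cdf_diff: "finite_rv X \<Longrightarrow> rv_pmf X b = rv_cdf X b - rv_cdf_left X b"
proof -
  assume X: "finite_rv X"
  have "{s\<in>space PS. X s \<le> b} = {s\<in>space PS. X s < b} \<union> {s\<in>space PS. X s = b}"
    by auto
  moreover have "measure PS ({s\<in>space PS. X s < b} \<union> {s\<in>space PS. X s = b}) =
      measure PS {s\<in>space PS. X s < b} + measure PS {s\<in>space PS. X s = b}"
    by (rule PS.finite_measure_Union[OF finite_rv_sets[OF X] finite_rv_sets[OF X]]) auto
  ultimately have "rv_cdf X b = rv_cdf_left X b + rv_pmf X b"
    unfolding rv_cdf_def rv_cdf_left_def rv_pmf_def by simp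
  then show ?thesis by simp
qed

lemma measure_down_closed_eq_rv_cdf:
  assumes "finite (X ` space PS)" and down_closed: "\<And>v w. P w \<Longrightarrow> v \<le> w \<Longrightarrow> P v"
  shows "measure PS {s\<in>space PS. P (X s)} =
    (if {v\<in>X ` space PS. P v} = {} then 0 else rv_cdf X (Max {v\<in>X ` space PS. P v}))"
proof (cases "{v\<in>X ` space PS. P v} = {}")
  case True
  then have "{s\<in>space PS. P (X s)} = {}" by auto
  then show ?thesis using True by (simp only:) simp
next
  case False
  let ?L = "{v\<in>X ` space PS. P v}"
  have "finite ?L" using assms(1) by simp
  then have "Max ?L \<in> ?L" "\<And>v. v \<in> ?L \<Longrightarrow> v \<le> Max ?L"
    using Max_in[OF _ False] by auto
  then have "{s\<in>space PS. P (X s)} = {s\<in>space PS. X s \<le> Max ?L}"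
    using down_closed by blast
  then show ?thesis
    using False by (subst if_not_P) (simp_all add: rv_cdf_def)
qed

lemma rv_cdf_eq_Max_below:
  "finite (X ` space PS) \<Longrightarrow> rv_cdf X t =
    (if {v\<in>X ` space PS. v \<le> t} = {} then 0 else rv_cdf X (Max {v\<in>X ` space PS. v \<le> t}))"
  using measure_down_closed_eq_rv_cdf[of X "\<lambda>v. v \<le> t"] by (simp add: rv_cdf_def)

lemma rv_cdf_left_eq_Max_below:
  "finite (X ` space PS) \<Longrightarrow> rv_cdf_left X t =
    (if {v\<in>X ` space PS. v < t} = {} then 0 else rv_cdf X (Max {v\<in>X ` space PS. v < t}))"
  using measure_down_closed_eq_rv_cdf[of X "\<lambda>v. v < t"] by (simp add: rv_cdf_left_def)

lemma image_space_PS_nonempty: "X ` space PS \<noteq> {}"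
  by (simp add: space_PS)

definition quantile :: "(real \<Rightarrow> real) \<Rightarrow> real \<Rightarrow> real" where
  "quantile X u = Min ({v\<in>X ` space PS. u < rv_cdf X v} \<union> {Max (X ` space PS)})"

lemma quantile_in_range:
  assumes fin: "finite (X ` space PS)"
  shows "quantile X u \<in> X ` space PS"
proof -
  have "Max (X ` space PS) \<in> X ` space PS"
    using Max_in[OF fin image_space_PS_nonempty] .
  then have "{v\<in>X ` space PS. u < rv_cdf X v} \<union> {Max (X ` space PS)} \<subseteq> X ` space PS"
    by blast
  moreover have "quantile X u \<in> {v\<in>X ` space PS. u < rv_cdf X v} \<union> {Max (X ` space PS)}"
    unfolding quantile_def using fin by (intro Min_in) auto
  ultimately show ?thesis by blast
qed

lemma quantile_mono: "finite (X ` space PS) \<Longrightarrow> mono (quantile X)"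
  unfolding quantile_def by (intro monoI Min_antimono) auto

lemma quantile_le_iff:
  assumes X: "finite_rv X" and u: "0 \<le> u"
  shows "quantile X u \<le> t \<longleftrightarrow> u < rv_cdf X t \<or> Max (X ` space PS) \<le> t"
proof -
  let ?V = "X ` space PS"
  let ?S = "{v\<in>?V. u < rv_cdf X v} \<union> {Max ?V}"
  have fin: "finite ?V" using X by (simp add: finite_rv_def)
  have Q_le: "quantile X u \<le> v" if "v \<in> ?S" for v
    unfolding quantile_def using fin that by (intro Min_le) auto
  show ?thesis
  proof
    assume "quantile X u \<le> t"
    moreover have "quantile X u \<in> ?S"
      unfolding quantile_def using fin by (intro Min_in) auto
    ultimately show "u < rv_cdf X t \<or> Max ?V \<le> t"
      using rv_cdf_mono[OF X, of "quantile X u" t] by auto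
  next
    assume "u < rv_cdf X t \<or> Max ?V \<le> t"
    then show "quantile X u \<le> t"
    proof
      assume lt: "u < rv_cdf X t"
      let ?L = "{v\<in>?V. v \<le> t}"
      have "?L \<noteq> {}" and F_Max: "rv_cdf X (Max ?L) = rv_cdf X t"
        using rv_cdf_eq_Max_below[OF fin, of t] lt u by (auto split: if_splits)
      then have "Max ?L \<in> ?L"
        using fin Max_in[of ?L] by auto
      then have "Max ?L \<in> ?S"
        using F_Max lt by auto
      then have "quantile X u \<le> Max ?L"
        by (rule Q_le)
      with \<open>Max ?L \<in> ?L\<close> show ?thesis
        by simp
    next
      assume "Max ?V \<le> t"
      then show ?thesis
        using Q_le[of "Max ?V"] by simp
    qed
  qed
qed

lemma quantile_less_iff:
  assumes X: "finite_rv X" and u: "0 \<le> u" and b: "b \<in> X ` space PS"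
  shows "quantile X u < b \<longleftrightarrow> u < rv_cdf_left X b"
proof -
  let ?V = "X ` space PS"
  let ?L = "{v\<in>?V. v < b}"
  have fin: "finite ?V" using X by (simp add: finite_rv_def)
  have Max_L: "Max ?L \<in> ?L" "rv_cdf_left X b = rv_cdf X (Max ?L)" if "?L \<noteq> {}"
    using Max_in[OF _ that] fin rv_cdf_left_eq_Max_below[OF fin, of b] that by auto
  show ?thesis
  proof
    assume less: "quantile X u < b"
    then have "quantile X u \<in> ?L"
      using quantile_in_range[OF fin] by auto
    then have "?L \<noteq> {}" and "quantile X u \<le> Max ?L"
      using fin by auto
    moreover have "Max ?L < Max ?V"
      using Max_L(1)[OF \<open>?L \<noteq> {}\<close>] Max_ge[OF fin b] by auto
    ultimately show "u < rv_cdf_left X b"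
      using quantile_le_iff[OF X u, of "Max ?L"] Max_L(2) by auto
  next
    assume less: "u < rv_cdf_left X b"
    have "?L \<noteq> {}"
    proof
      assume "?L = {}"
      then have "rv_cdf_left X b = 0"
        using rv_cdf_left_eq_Max_below[OF fin, of b] by simp
      with less u show False by simp
    qed
    then have "quantile X u \<le> Max ?L"
      using quantile_le_iff[OF X u] less Max_L(2) by auto
    then show "quantile X u < b"
      using Max_L(1)[OF \<open>?L \<noteq> {}\<close>] by auto
  qed
qed

section \<open>The quantile transform\<close>

definition uniform_on :: "real set \<Rightarrow> (real \<Rightarrow> real) \<Rightarrow> bool" where
  "uniform_on C G \<longleftrightarrow> C \<in> sets PS \<and> (\<forall>s\<in>C. 0 \<le> G s \<and> G s \<le> 1) \<and>
     (\<forall>u\<in>{0..1}. {s\<in>C. G s < u} \<in> sets PS \<and> measure PS {s\<in>C. G s < u} = u * measure PS C)"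

lemma measure_quantile_comp_eq:
  assumes X: "finite_rv X" and G: "uniform_on C G"
  shows "measure PS {s\<in>C. quantile X (G s) = b} = rv_pmf X b * measure PS C"
proof (cases "b \<in> X ` space PS")
  case False
  then have no_b: "{s\<in>C. quantile X (G s) = b} = {}" "{s\<in>space PS. X s = b} = {}"
    using quantile_in_range X by (auto simp: finite_rv_def)
  show ?thesis
    unfolding rv_pmf_def no_b by simp
next
  case b: True
  let ?V = "X ` space PS"
  have C: "C \<in> sets PS" and G01: "\<And>s. s \<in> C \<Longrightarrow> 0 \<le> G s \<and> G s \<le> 1"
    and G_less: "\<And>u. 0 \<le> u \<Longrightarrow> u \<le> 1 \<Longrightarrow>
      {s\<in>C. G s < u} \<in> sets PS \<and> measure PS {s\<in>C. G s < u} = u * measure PS C"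
    using G by (auto simp: uniform_on_def)
  have fin: "finite ?V" using X by (simp add: finite_rv_def)
  have cdf_bounds: "0 \<le> rv_cdf_left X b" "rv_cdf_left X b \<le> rv_cdf X b" "rv_cdf X b \<le> 1"
    using rv_pmf_eq_rv_cdf_diff[OF X, of b] measure_nonneg[of PS "{s\<in>space PS. X s = b}"]
    by (auto simp: rv_pmf_def rv_cdf_def rv_cdf_left_def)
  define U where "U = {s\<in>C. G s < rv_cdf X b \<or> Max ?V \<le> b}"
  have U: "U \<in> sets PS \<and> measure PS U = rv_cdf X b * measure PS C"
  proof (cases "Max ?V \<le> b")
    case True
    then show ?thesis
      using C rv_cdf_eq_1[OF fin True] by (simp add: U_def sets.Int_space_eq2)
  next
    case False
    then show ?thesis
      using G_less cdf_bounds by (simp add: U_def)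
  qed
  have "{s\<in>C. quantile X (G s) = b} = U - {s\<in>C. G s < rv_cdf_left X b}"
    using quantile_le_iff[OF X] quantile_less_iff[OF X _ b] G01
    by (auto simp: U_def order.order_iff_strict)
  moreover have "measure PS (U - {s\<in>C. G s < rv_cdf_left X b}) =
      measure PS U - measure PS {s\<in>C. G s < rv_cdf_left X b}"
    using U G_less cdf_bounds by (intro PS.finite_measure_Diff) (auto simp: U_def)
  ultimately show ?thesis
    using U G_less cdf_bounds rv_pmf_eq_rv_cdf_diff[OF X, of b] by (simp add: left_diff_distrib)
qed

lemma uniform_on_frac: "uniform_on (space PS) frac"
  unfolding uniform_on_def
proof (intro conjI ballI)
  fix u :: real
  assume u: "u \<in> {0..1}"
  show "{s\<in>space PS. frac s < u} \<in> sets PS"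
    using borel_measurable_frac_PS by measurable
  have "frac s = (if s = 1 then 0 else s)" if "s \<in> {0..1}" for s :: real
    using that by (auto simp: frac_eq_id)
  then have "{s\<in>space PS. frac s < u} = (if u = 0 then {} else {0..<u} \<union> {1})"
    using u by (auto simp: space_PS split: if_splits)
  moreover have "measure PS ({0..<u} \<union> {1}) = measure PS {0..<u}"
    using u finite_null_sets_PS[of "{1}"]
    by (intro measure_Un_null_set) (auto simp: sets_PS)
  ultimately show "measure PS {s\<in>space PS. frac s < u} = u * measure PS (space PS)"
    using u by (simp add: measure_PS_atLeastLessThan PS.prob_space)
qed (auto simp: frac_lt_1 less_imp_le)

definition mass_below :: "real set \<Rightarrow> real \<Rightarrow> real" where
  "mass_below C t = measure PS (C \<inter> {..t})"

lemma sets_PS_Int_atMost: "C \<in> sets PS \<Longrightarrow> C \<inter> {..t} \<in> sets PS"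
  by (auto simp: sets_PS)

lemma mass_below_mono: "C \<in> sets PS \<Longrightarrow> s \<le> t \<Longrightarrow> mass_below C s \<le> mass_below C t"
  unfolding mass_below_def by (rule PS.finite_measure_mono) (auto simp: sets_PS_Int_atMost)

lemma borel_measurable_mass_below: "C \<in> sets PS \<Longrightarrow> mass_below C \<in> borel_measurable PS"
  by (intro borel_measurable_PS borel_measurable_mono monoI mass_below_mono)

lemma mass_below_diff_le:
  assumes C: "C \<in> sets PS" and "s \<le> t"
  shows "mass_below C t - mass_below C s \<le> t - s"
proof -
  have "mass_below C t - mass_below C s = measure PS (C \<inter> {..t} - C \<inter> {..s})"
    unfolding mass_below_def using assms
    by (intro PS.finite_measure_Diff[symmetric]) (auto simp: sets_PS_Int_atMost)
  also have "\<dots> \<le> t - s"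
  proof (cases "max 0 s \<le> min 1 t")
    case True
    have "measure PS (C \<inter> {..t} - C \<inter> {..s}) \<le> measure PS {max 0 s .. min 1 t}"
      using C by (intro PS.finite_measure_mono) (auto simp: sets_PS)
    also have "\<dots> \<le> t - s"
      using True by (simp add: measure_PS_atLeastAtMost)
    finally show ?thesis .
  next
    case False
    then have empty: "C \<inter> {..t} - C \<inter> {..s} = {}"
      using C by (auto simp: sets_PS)
    show ?thesis
      unfolding empty using \<open>s \<le> t\<close> by simp
  qed
  finally show ?thesis .
qed

lemma continuous_on_mass_below: "C \<in> sets PS \<Longrightarrow> continuous_on A (mass_below C)"
proof (intro lipschitz_on_continuous_on lipschitz_onI)
  fix s t
  assume C: "C \<in> sets PS"
  show "dist (mass_below C s) (mass_below C t) \<le> 1 * dist s t"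
    using mass_below_diff_le[OF C, of s t] mass_below_diff_le[OF C, of t s]
      mass_below_mono[OF C, of s t] mass_below_mono[OF C, of t s]
    by (cases "s \<le> t") (auto simp: dist_real_def)
qed simp

text \<open>Since the mass of C below t moves continuously from 0 to the mass of C, every
  intermediate value c is attained; the points of C where it is below c have total mass c.\<close>
lemma measure_mass_below_less:
  assumes C: "C \<in> sets PS" and c: "0 \<le> c" "c \<le> measure PS C"
  shows "measure PS {s\<in>C. mass_below C s < c} = c"
proof -
  let ?h = "mass_below C"
  let ?T = "{t. c \<le> ?h t} \<inter> {0..1}"
  have C01: "C \<subseteq> {0..1}" using C by (simp add: sets_PS)
  have h0: "?h 0 = 0"
  proof -
    have "?h 0 \<le> measure PS {0}"
      unfolding mass_below_def using C01 finite_null_sets_PS[of "{0}"]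
      by (intro PS.finite_measure_mono) (auto simp: sets_PS)
    then show ?thesis
      using measure_PS[of "{0}"] measure_nonneg[of PS "C \<inter> {..0}"] by (simp add: mass_below_def)
  qed
  have "C \<inter> {..1} = C" using C01 by auto
  then have "1 \<in> ?T" using c by (simp add: mass_below_def)
  moreover have "closed ?T"
    by (intro closed_Int closed_Collect_le continuous_on_const continuous_on_mass_below[OF C]) auto
  moreover have "bdd_below ?T"
    by (rule bdd_belowI[of _ 0]) auto
  ultimately have t0: "Inf ?T \<in> ?T" and t0_le: "\<And>t. t \<in> ?T \<Longrightarrow> Inf ?T \<le> t"
    using closed_contains_Inf[of ?T] cInf_lower[of _ ?T] by blast+
  define t0 where "t0 = Inf ?T"
  obtain t where t: "0 \<le> t" "t \<le> t0" "?h t = c"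
    using IVT'[of ?h 0 c t0] h0 c t0 continuous_on_mass_below[OF C] by (auto simp: t0_def)
  with t0 t0_le have "t = t0" by (force simp: t0_def)
  with t have h_t0: "?h t0 = c" by simp
  have "?h s < c \<longleftrightarrow> s < t0" if "s \<in> C" for s
  proof
    assume "?h s < c"
    then show "s < t0"
      using mass_below_mono[OF C, of t0 s] h_t0 by (cases "t0 \<le> s") auto
  next
    assume "s < t0"
    then show "?h s < c"
      using that C01 t0_le[of s] by (force simp: t0_def)
  qed
  then have "{s\<in>C. ?h s < c} = C \<inter> {..t0} - {t0}"
    by auto
  moreover have "measure PS (C \<inter> {..t0} - {t0}) = measure PS (C \<inter> {..t0})"
    using t0 finite_null_sets_PS[of "{t0}"] sets_PS_Int_atMost[OF C]
    by (intro measure_Diff_null_set) (auto simp: t0_def)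
  ultimately show ?thesis
    using h_t0 by (simp add: mass_below_def)
qed

lemma uniform_on_mass_below:
  assumes C: "C \<in> sets PS"
  shows "uniform_on C (\<lambda>s. mass_below C s / measure PS C)"
  unfolding uniform_on_def
proof (intro conjI ballI C)
  fix s
  have "mass_below C s \<le> measure PS C"
    unfolding mass_below_def using C by (intro PS.finite_measure_mono) auto
  then show "mass_below C s / measure PS C \<le> 1"
    by (cases "measure PS C = 0") (auto simp: divide_le_eq_1 zero_less_measure_iff)
  show "0 \<le> mass_below C s / measure PS C"
    by (simp add: mass_below_def)
next
  fix u :: real
  assume u: "u \<in> {0..1}"
  have "{s\<in>C. mass_below C s / measure PS C < u} =
      C \<inter> {s\<in>space PS. mass_below C s / measure PS C < u}"
    using C by (auto simp: sets_PS space_PS)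
  also have "\<dots> \<in> sets PS"
    using C borel_measurable_mass_below[OF C] by measurable
  finally show "{s\<in>C. mass_below C s / measure PS C < u} \<in> sets PS" .
  show "measure PS {s\<in>C. mass_below C s / measure PS C < u} = u * measure PS C"
  proof (cases "measure PS C = 0")
    case True
    then show ?thesis
      using C PS.finite_measure_mono[of "{s\<in>C. mass_below C s / measure PS C < u}" C]
        measure_nonneg[of PS "{s\<in>C. mass_below C s / measure PS C < u}"]
      by (simp del: measure_nonneg)
  next
    case False
    then have "{s\<in>C. mass_below C s / measure PS C < u} =
        {s\<in>C. mass_below C s < u * measure PS C}"
      by (auto simp: divide_less_eq zero_less_measure_iff)
    then show ?thesis
      using C u measure_mass_below_less[OF C, of "u * measure PS C"]
      by (simp add: mult_left_le_one_le)
  qed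
qed

lemma uniform_on_cong:
  "(\<And>s. s \<in> C \<Longrightarrow> G s = G' s) \<Longrightarrow> uniform_on C G \<longleftrightarrow> uniform_on C G'"
  unfolding uniform_on_def by (metis (mono_tags, lifting) Collect_cong)

section \<open>Independent copies and the law invariance of the preference\<close>

text \<open>Being uniform on every cell of (X, Y), the rank is independent of (X, Y). On a null cell
  the division yields 0, which is harmless.\<close>
definition rank_in_cell :: "(real \<Rightarrow> real) \<Rightarrow> (real \<Rightarrow> real) \<Rightarrow> real \<Rightarrow> real" where
  "rank_in_cell X Y s =
     (let C = {r\<in>space PS. (X r, Y r) = (X s, Y s)} in mass_below C s / measure PS C)"

lemma uniform_on_rank_in_cell:
  assumes "X \<in> borel_measurable PS" "Y \<in> borel_measurable PS"
  shows "uniform_on {s\<in>space PS. (X s, Y s) = p} (rank_in_cell X Y)"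
proof -
  let ?C = "{s\<in>space PS. (X s, Y s) = p}"
  have "rank_in_cell X Y s = mass_below ?C s / measure PS ?C" if "s \<in> ?C" for s
    using that by (simp add: rank_in_cell_def Let_def)
  then have "uniform_on ?C (rank_in_cell X Y) \<longleftrightarrow>
      uniform_on ?C (\<lambda>s. mass_below ?C s / measure PS ?C)"
    by (rule uniform_on_cong)
  also have "\<dots>"
    using sets_PS_pair_eq[OF assms] by (rule uniform_on_mass_below)
  finally show ?thesis .
qed

lemma borel_measurable_rank_in_cell:
  assumes X: "finite_rv X" and Y: "finite_rv Y"
  shows "rank_in_cell X Y \<in> borel_measurable PS"
proof (rule measurable_piecewise_restrict)
  let ?cells = "(\<lambda>p. {s\<in>space PS. (X s, Y s) = p}) ` (X ` space PS \<times> Y ` space PS)"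
  show "countable ?cells"
    using X Y by (intro countable_finite) (simp add: finite_rv_def)
  show "space PS \<subseteq> \<Union> ?cells"
    by auto
  fix C
  assume "C \<in> ?cells"
  then obtain p where C: "C = {s\<in>space PS. (X s, Y s) = p}"
    by blast
  then have C_sets: "C \<in> sets PS"
    using X Y sets_PS_pair_eq[of X Y p] by (simp add: finite_rv_def)
  then show "C \<inter> space PS \<in> sets PS"
    by simp
  have "(\<lambda>s. mass_below C s / measure PS C) \<in> borel_measurable (restrict_space PS C)"
    using borel_measurable_mass_below[OF C_sets]
    by (intro measurable_restrict_space1 borel_measurable_divide borel_measurable_const)
  moreover have "rank_in_cell X Y s = mass_below C s / measure PS C"
    if "s \<in> space (restrict_space PS C)" for s
    using that C by (simp add: rank_in_cell_def Let_def space_restrict_space)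
  ultimately show "rank_in_cell X Y \<in> borel_measurable (restrict_space PS C)"
    by (subst measurable_cong) simp_all
qed

text \<open>A random variable with the law of X that is independent of the pair (X, Y).\<close>
definition indep_copy :: "(real \<Rightarrow> real) \<Rightarrow> (real \<Rightarrow> real) \<Rightarrow> real \<Rightarrow> real" where
  "indep_copy X Y s = quantile X (rank_in_cell X Y s)"

lemma finite_rv_indep_copy:
  assumes X: "finite_rv X" and Y: "finite_rv Y"
  shows "finite_rv (indep_copy X Y)" and "indep_copy X Y ` space PS \<subseteq> X ` space PS"
proof -
  have fin: "finite (X ` space PS)" using X by (simp add: finite_rv_def)
  show range: "indep_copy X Y ` space PS \<subseteq> X ` space PS"
    using quantile_in_range[OF fin] by (auto simp: indep_copy_def)
  have "indep_copy X Y \<in> borel_measurable PS"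
    unfolding indep_copy_def
    by (rule measurable_compose[OF borel_measurable_rank_in_cell[OF X Y]
          borel_measurable_mono[OF quantile_mono[OF fin]]])
  then show "finite_rv (indep_copy X Y)"
    using range fin finite_subset by (auto simp: finite_rv_def)
qed

lemma measure_indep_copy:
  assumes X: "finite_rv X" and Y: "finite_rv Y"
  shows "measure PS {s\<in>space PS. (X s, Y s) \<in> A \<and> indep_copy X Y s = b} =
    rv_pmf X b * measure PS {s\<in>space PS. (X s, Y s) \<in> A}"
proof -
  let ?W = "X ` space PS \<times> Y ` space PS"
  have W: "finite ?W" "(\<lambda>s. (X s, Y s)) ` space PS \<subseteq> ?W"
    using X Y by (auto simp: finite_rv_def)
  have XY: "X \<in> borel_measurable PS" "Y \<in> borel_measurable PS"
    using X Y by (auto simp: finite_rv_def)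
  have "measure PS {s\<in>space PS. (X s, Y s) \<in> A \<and> indep_copy X Y s = b} =
      (\<Sum>p\<in>?W \<inter> A. measure PS {s\<in>space PS. (X s, Y s) = p \<and> indep_copy X Y s = b})"
    using finite_rv_sets[OF finite_rv_indep_copy(1)[OF X Y]]
    by (rule measure_pair_split[OF XY W])
  also have "\<dots> = (\<Sum>p\<in>?W \<inter> A. rv_pmf X b * measure PS {s\<in>space PS. (X s, Y s) = p})"
  proof (intro sum.cong refl)
    fix p
    have "measure PS {s\<in>{s\<in>space PS. (X s, Y s) = p}. indep_copy X Y s = b} =
        rv_pmf X b * measure PS {s\<in>space PS. (X s, Y s) = p}"
      unfolding indep_copy_def using X uniform_on_rank_in_cell[OF XY]
      by (rule measure_quantile_comp_eq)
    then show "measure PS {s\<in>space PS. (X s, Y s) = p \<and> indep_copy X Y s = b} =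
        rv_pmf X b * measure PS {s\<in>space PS. (X s, Y s) = p}"
      by (simp add: conj_assoc)
  qed
  also have "\<dots> = rv_pmf X b * measure PS {s\<in>space PS. (X s, Y s) \<in> A}"
    by (simp add: sum_distrib_left measure_pair_eq_sum[OF XY W])
  finally show ?thesis .
qed

lemma simpleL_if_range_subset:
  assumes "X \<in> simpleL xl xu" "finite_rv Z" "Z ` space PS \<subseteq> X ` space PS"
  shows "Z \<in> simpleL xl xu"
  using assms by (auto simp: simpleL_def finite_rv_def)

lemma indep_copy_simpleL:
  "X \<in> simpleL xl xu \<Longrightarrow> finite_rv Y \<Longrightarrow> indep_copy X Y \<in> simpleL xl xu"
  using finite_rv_indep_copy[OF simpleL_finite_rv] by (blast intro: simpleL_if_range_subset)

lemma indifferent_if_same_pmf: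
  assumes R: "complete_on (simpleL xl xu) R" "transitive_on (simpleL xl xu) R"
    "regret_based xl xu R"
    and X: "X \<in> simpleL xl xu" and Y: "Y \<in> simpleL xl xu"
    and same_pmf: "rv_pmf X = rv_pmf Y"
  shows "R X Y \<and> R Y X"
proof -
  let ?Z = "indep_copy X Y"
  have Z: "?Z \<in> simpleL xl xu"
    using X Y by (simp add: indep_copy_simpleL simpleL_finite_rv)
  have rvs: "finite_rv X" "finite_rv Y"
    using X Y by (simp_all add: simpleL_finite_rv)
  have "measure PS {s\<in>space PS. X s = a \<and> ?Z s = b} = rv_pmf X a * rv_pmf X b" for a b
    using measure_indep_copy[OF rvs, of "{a} \<times> UNIV" b] by (simp add: rv_pmf_def mult.commute)
  then have XZ: "R X ?Z \<and> R ?Z X"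
    using indifferent_if_exchangeable[OF R(1,3) X Z] by (simp add: conj_commute mult.commute)
  have "measure PS {s\<in>space PS. Y s = a \<and> ?Z s = b} = rv_pmf Y a * rv_pmf Y b" for a b
    using measure_indep_copy[OF rvs, of "UNIV \<times> {a}" b] same_pmf
    by (simp add: rv_pmf_def mult.commute)
  then have YZ: "R Y ?Z \<and> R ?Z Y"
    using indifferent_if_exchangeable[OF R(1,3) Y Z] by (simp add: conj_commute mult.commute)
  show ?thesis
    using XZ YZ R(2) X Y Z unfolding transitive_on_def by blast
qed

section \<open>Quantile representations and stochastic dominance\<close>

lemma less_rv_cdf_quantile:
  assumes X: "finite_rv X" and u: "0 \<le> u" "u < 1"
  shows "u < rv_cdf X (quantile X u)"
  using quantile_le_iff[OF X u(1), of "quantile X u"] rv_cdf_eq_1[of X "quantile X u"] X u(2)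
  by (auto simp: finite_rv_def)

lemma less_quantile_if_rv_cdf_le:
  assumes X: "finite_rv X" and u: "0 \<le> u" "u < 1" and le: "rv_cdf X t \<le> u"
  shows "t < quantile X u"
  using quantile_le_iff[OF X u(1), of t] rv_cdf_eq_1[of X t] X u(2) le
  by (auto simp: finite_rv_def)

lemma quantile_antimono_cdf:
  assumes X: "finite_rv X" and Y: "finite_rv Y" and cdf_le: "\<And>t. rv_cdf X t \<le> rv_cdf Y t"
    and u: "0 \<le> u" "u < 1"
  shows "quantile Y u \<le> quantile X u"
  using less_rv_cdf_quantile[OF X u] cdf_le[of "quantile X u"] quantile_le_iff[OF Y u(1)] by auto

text \<open>A non-decreasing function of the state with the law of X; frac only moves the state 1
  to 0, which keeps the argument of quantile below 1.\<close>
definition quantile_rep :: "(real \<Rightarrow> real) \<Rightarrow> real \<Rightarrow> real" where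
  "quantile_rep X s = quantile X (frac s)"

lemma finite_rv_quantile_rep:
  assumes X: "finite_rv X"
  shows "finite_rv (quantile_rep X)" and "quantile_rep X ` space PS \<subseteq> X ` space PS"
proof -
  have fin: "finite (X ` space PS)" using X by (simp add: finite_rv_def)
  show range: "quantile_rep X ` space PS \<subseteq> X ` space PS"
    using quantile_in_range[OF fin] by (auto simp: quantile_rep_def)
  have "quantile_rep X \<in> borel_measurable PS"
    unfolding quantile_rep_def
    by (rule measurable_compose[OF borel_measurable_frac_PS
          borel_measurable_mono[OF quantile_mono[OF fin]]])
  then show "finite_rv (quantile_rep X)"
    using range fin finite_subset by (auto simp: finite_rv_def)
qed

lemma rv_pmf_quantile_rep: "finite_rv X \<Longrightarrow> rv_pmf (quantile_rep X) = rv_pmf X"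
  using measure_quantile_comp_eq[OF _ uniform_on_frac]
  by (auto simp: rv_pmf_def quantile_rep_def PS.prob_space)

lemma indifferent_quantile_rep:
  assumes "complete_on (simpleL xl xu) R" "transitive_on (simpleL xl xu) R" "regret_based xl xu R"
    and X: "X \<in> simpleL xl xu"
  shows "quantile_rep X \<in> simpleL xl xu" and "R X (quantile_rep X) \<and> R (quantile_rep X) X"
proof -
  note rep = finite_rv_quantile_rep[OF simpleL_finite_rv[OF X]]
  show rep_L: "quantile_rep X \<in> simpleL xl xu"
    using X rep by (rule simpleL_if_range_subset)
  show "R X (quantile_rep X) \<and> R (quantile_rep X) X"
    using rv_pmf_quantile_rep[OF simpleL_finite_rv[OF X]]
    by (intro indifferent_if_same_pmf[OF assms(1-4) rep_L]) simp
qed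

lemma strict_fosd_quantile_rep:
  assumes X: "finite_rv X" and Y: "finite_rv Y" and fosd: "strict_fosd X Y"
  shows "\<forall>s\<in>space PS. quantile_rep Y s \<le> quantile_rep X s"
    and "measure PS {s\<in>space PS. quantile_rep Y s < quantile_rep X s} > 0"
proof -
  have cdf_le: "\<And>t. rv_cdf X t \<le> rv_cdf Y t" and "rv_cdf X \<noteq> rv_cdf Y"
    using fosd X Y by (auto simp: strict_fosd_def cdf_law_eq_rv_cdf finite_rv_def)
  then obtain t where t: "rv_cdf X t < rv_cdf Y t"
    by (metis ext order.not_eq_order_implies_strict)
  show "\<forall>s\<in>space PS. quantile_rep Y s \<le> quantile_rep X s"
    unfolding quantile_rep_def using quantile_antimono_cdf[OF X Y cdf_le frac_ge_0 frac_lt_1] by simp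
  let ?D = "{s\<in>space PS. quantile_rep Y s < quantile_rep X s}"
  have "{rv_cdf X t ..< rv_cdf Y t} \<subseteq> ?D"
  proof
    fix s
    assume s: "s \<in> {rv_cdf X t ..< rv_cdf Y t}"
    moreover have "0 \<le> rv_cdf X t" "rv_cdf Y t \<le> 1"
      by (simp_all add: rv_cdf_def)
    ultimately have s01: "0 \<le> s" "s < 1"
      by auto
    then have "quantile Y s \<le> t" "t < quantile X s"
      using s quantile_le_iff[OF Y] less_quantile_if_rv_cdf_le[OF X] by auto
    then show "s \<in> ?D"
      using s01 by (simp add: quantile_rep_def space_PS)
  qed
  moreover have "?D \<in> sets PS"
    using finite_rv_quantile_rep(1)[OF X] finite_rv_quantile_rep(1)[OF Y] by (rule finite_rv_pair_sets)
  ultimately have "measure PS {rv_cdf X t ..< rv_cdf Y t} \<le> measure PS ?D"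
    by (rule PS.finite_measure_mono)
  moreover have "measure PS {rv_cdf X t ..< rv_cdf Y t} = rv_cdf Y t - rv_cdf X t"
    using t PS.prob_le_1[of "{s\<in>space PS. Y s \<le> t}"] by (intro measure_PS_atLeastLessThan) (auto simp: rv_cdf_def)
  ultimately show "measure PS ?D > 0"
    using t by simp
qed

lemma strict_pref_if_strict_fosd:
  assumes R: "complete_on (simpleL xl xu) R" "transitive_on (simpleL xl xu) R" "regret_based xl xu R"
    and mono: "statewise_monotone xl xu R"
    and X: "X \<in> simpleL xl xu" and Y: "Y \<in> simpleL xl xu" and fosd: "strict_fosd X Y"
  shows "strict_pref R X Y"
proof -
  note X' = indifferent_quantile_rep[OF R X] and Y' = indifferent_quantile_rep[OF R Y]
  have "strict_pref R (quantile_rep X) (quantile_rep Y)"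
    using mono X'(1) Y'(1) strict_fosd_quantile_rep[OF simpleL_finite_rv[OF X] simpleL_finite_rv[OF Y] fosd]
    unfolding statewise_monotone_def by blast
  then show ?thesis
    using X'(2) Y'(2) R(2) X Y X'(1) Y'(1) unfolding strict_pref_def transitive_on_def by meson
qed

section \<open>Convergence in distribution\<close>

lemma rv_cdf_in_range: "finite (X ` space PS) \<Longrightarrow> rv_cdf X t \<in> insert 0 (rv_cdf X ` X ` space PS)"
  using rv_cdf_eq_Max_below[of X t] Max_in[of "{v\<in>X ` space PS. v \<le> t}"] by auto

lemma isCont_rv_cdf:
  assumes fin: "finite (X ` space PS)" and t: "t \<notin> X ` space PS"
  shows "isCont (rv_cdf X) t"
proof -
  have "\<forall>v\<in>X ` space PS. \<forall>\<^sub>F y in at t. v \<le> y \<longleftrightarrow> v \<le> t"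
  proof
    fix v
    assume "v \<in> X ` space PS"
    with t have "v < t \<or> t < v" by auto
    then show "\<forall>\<^sub>F y in at t. v \<le> y \<longleftrightarrow> v \<le> t"
    proof
      assume "v < t"
      then have "\<forall>\<^sub>F y in at t. v < y"
        by (rule order_tendstoD(1)[OF tendsto_ident_at])
      then show ?thesis
        by (rule eventually_mono) (use \<open>v < t\<close> in auto)
    next
      assume "t < v"
      then have "\<forall>\<^sub>F y in at t. y < v"
        by (rule order_tendstoD(2)[OF tendsto_ident_at])
      then show ?thesis
        by (rule eventually_mono) (use \<open>t < v\<close> in auto)
    qed
  qed
  then have "\<forall>\<^sub>F y in at t. \<forall>v\<in>X ` space PS. v \<le> y \<longleftrightarrow> v \<le> t"
    by (rule eventually_ball_finite[OF fin])
  then have "\<forall>\<^sub>F y in at t. {v\<in>X ` space PS. v \<le> y} = {v\<in>X ` space PS. v \<le> t}"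
    by (rule eventually_mono) blast
  then have "\<forall>\<^sub>F y in at t. rv_cdf X y = rv_cdf X t"
  proof (rule eventually_mono)
    fix y
    assume "{v\<in>X ` space PS. v \<le> y} = {v\<in>X ` space PS. v \<le> t}"
    then show "rv_cdf X y = rv_cdf X t"
      using rv_cdf_eq_Max_below[OF fin, of y] rv_cdf_eq_Max_below[OF fin, of t] by simp
  qed
  then show ?thesis
    unfolding continuous_at by (rule tendsto_eventually)
qed

lemma obtain_between_not_in_finite:
  fixes a b :: real
  assumes "a < b" "finite V"
  obtains t where "a < t" "t < b" "t \<notin> V"
proof -
  have "infinite ({a<..<b} - V)"
    using assms by (intro Diff_infinite_finite) auto
  then obtain t where "t \<in> {a<..<b} - V"
    by (metis ex_in_conv finite.emptyI)
  then show ?thesis using that by auto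
qed

lemma quantile_tendsto:
  assumes Xs: "\<And>k. finite_rv (Xs k)" and X: "finite_rv X"
    and cdf_conv: "\<And>t. t \<notin> X ` space PS \<Longrightarrow> (\<lambda>k. rv_cdf (Xs k) t) \<longlonglongrightarrow> rv_cdf X t"
    and u: "0 < u" "u < 1" "u \<notin> rv_cdf X ` X ` space PS"
  shows "(\<lambda>k. quantile (Xs k) u) \<longlonglongrightarrow> quantile X u"
proof (rule order_tendstoI)
  have fin: "finite (X ` space PS)" using X by (simp add: finite_rv_def)
  fix a
  assume "a < quantile X u"
  then obtain t where t: "a < t" "t < quantile X u" "t \<notin> X ` space PS"
    using fin by (rule obtain_between_not_in_finite)
  then have "rv_cdf X t \<le> u"
    using quantile_le_iff[OF X, of u t] u by auto
  moreover have "rv_cdf X t \<noteq> u"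
    using rv_cdf_in_range[OF fin, of t] u by auto
  ultimately have "\<forall>\<^sub>F k in sequentially. rv_cdf (Xs k) t < u"
    by (intro order_tendstoD(2)[OF cdf_conv[OF t(3)]]) simp
  then show "\<forall>\<^sub>F k in sequentially. a < quantile (Xs k) u"
  proof (rule eventually_mono)
    fix k
    assume "rv_cdf (Xs k) t < u"
    then have "t < quantile (Xs k) u"
      using u by (intro less_quantile_if_rv_cdf_le[OF Xs]) simp_all
    with t show "a < quantile (Xs k) u" by simp
  qed
next
  have fin: "finite (X ` space PS)" using X by (simp add: finite_rv_def)
  fix a
  assume "quantile X u < a"
  then obtain t where t: "quantile X u < t" "t < a" "t \<notin> X ` space PS"
    using fin by (rule obtain_between_not_in_finite)
  have "u < rv_cdf X (quantile X u)"
    using u by (intro less_rv_cdf_quantile[OF X]) simp_all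
  also have "\<dots> \<le> rv_cdf X t"
    using t by (intro rv_cdf_mono[OF X]) simp
  finally have "u < rv_cdf X t" .
  then have "\<forall>\<^sub>F k in sequentially. u < rv_cdf (Xs k) t"
    by (rule order_tendstoD(1)[OF cdf_conv[OF t(3)]])
  then show "\<forall>\<^sub>F k in sequentially. quantile (Xs k) u < a"
  proof (rule eventually_mono)
    fix k
    assume "u < rv_cdf (Xs k) t"
    then have "quantile (Xs k) u \<le> t"
      using quantile_le_iff[OF Xs, of u k t] u by simp
    with t show "quantile (Xs k) u < a" by simp
  qed
qed

lemma AE_tendsto_quantile_rep:
  assumes Xs: "\<And>k. finite_rv (Xs k)" and X: "finite_rv X"
    and cdf_conv: "\<And>t. t \<notin> X ` space PS \<Longrightarrow> (\<lambda>k. rv_cdf (Xs k) t) \<longlonglongrightarrow> rv_cdf X t"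
  shows "AE s in PS. (\<lambda>k. quantile_rep (Xs k) s) \<longlonglongrightarrow> quantile_rep X s"
proof (rule AE_I')
  let ?N = "insert 0 (insert 1 (rv_cdf X ` X ` space PS))"
  have "finite ?N" "?N \<subseteq> {0..1}"
    using X by (auto simp: finite_rv_def rv_cdf_def)
  then show "?N \<in> null_sets PS"
    by (rule finite_null_sets_PS)
  show "{s\<in>space PS. \<not> (\<lambda>k. quantile_rep (Xs k) s) \<longlonglongrightarrow> quantile_rep X s} \<subseteq> ?N"
  proof (rule subsetI, rule ccontr)
    fix s
    assume s: "s \<in> {s\<in>space PS. \<not> (\<lambda>k. quantile_rep (Xs k) s) \<longlonglongrightarrow> quantile_rep X s}"
      "s \<notin> ?N"
    then have "0 < s" "s < 1"
      by (auto simp: space_PS)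
    then have "(\<lambda>k. quantile (Xs k) s) \<longlonglongrightarrow> quantile X s"
      using s(2) by (intro quantile_tendsto[OF Xs X cdf_conv]) auto
    with s(1) \<open>0 < s\<close> \<open>s < 1\<close> show False
      by (simp add: quantile_rep_def frac_eq_id)
  qed
qed

lemma conv_in_prob_if_AE_tendsto:
  assumes Xs: "\<And>k. Xs k \<in> borel_measurable PS" and X: "X \<in> borel_measurable PS"
    and lim: "AE s in PS. (\<lambda>k. Xs k s) \<longlonglongrightarrow> X s"
  shows "conv_in_prob Xs X"
  unfolding conv_in_prob_def
proof (intro allI impI)
  fix e :: real
  assume "e > 0"
  define A where "A k = {s\<in>space PS. e \<le> \<bar>Xs k s - X s\<bar>}" for k
  have A: "A k \<in> sets PS" for k
    unfolding A_def using Xs X by measurable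
  have "AE s in PS. (\<lambda>k. indicator (A k) s :: real) \<longlonglongrightarrow> 0"
  proof (rule AE_mp[OF lim], intro AE_I2 impI)
    fix s
    assume "(\<lambda>k. Xs k s) \<longlonglongrightarrow> X s"
    then have "\<forall>\<^sub>F k in sequentially. \<bar>Xs k s - X s\<bar> < e"
      using \<open>e > 0\<close> by (simp add: tendsto_iff dist_real_def)
    then have "\<forall>\<^sub>F k in sequentially. indicator (A k) s = (0::real)"
      by (rule eventually_mono) (auto simp: A_def)
    then show "(\<lambda>k. indicator (A k) s :: real) \<longlonglongrightarrow> 0"
      by (rule tendsto_eventually)
  qed
  then have "(\<lambda>k. integral\<^sup>L PS (indicator (A k) :: real \<Rightarrow> real)) \<longlonglongrightarrow>
      integral\<^sup>L PS (\<lambda>_. 0 :: real)"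
    using A by (intro integral_dominated_convergence[where w = "\<lambda>_. 1"]) auto
  then show "(\<lambda>k. measure PS {s\<in>space PS. e \<le> \<bar>Xs k s - X s\<bar>}) \<longlonglongrightarrow> 0"
    using A by (simp add: A_def)
qed

lemma sequential_continuity_transfer:
  assumes trans: "transitive_on (simpleL xl xu) R"
    and Xs: "\<And>k. Xs k \<in> simpleL xl xu" and X: "X \<in> simpleL xl xu" and Y: "Y \<in> simpleL xl xu"
    and Xs': "\<And>k. Xs' k \<in> simpleL xl xu" "\<And>k. R (Xs k) (Xs' k) \<and> R (Xs' k) (Xs k)"
    and X': "X' \<in> simpleL xl xu" "R X X' \<and> R X' X"
    and cont': "((\<forall>k. R (Xs' k) Y) \<longrightarrow> R X' Y) \<and> ((\<forall>k. R Y (Xs' k)) \<longrightarrow> R Y X')"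
  shows "((\<forall>k. R (Xs k) Y) \<longrightarrow> R X Y) \<and> ((\<forall>k. R Y (Xs k)) \<longrightarrow> R Y X)"
proof -
  have R_trans: "\<And>A B C. A \<in> simpleL xl xu \<Longrightarrow> B \<in> simpleL xl xu \<Longrightarrow> C \<in> simpleL xl xu \<Longrightarrow>
      R A B \<Longrightarrow> R B C \<Longrightarrow> R A C"
    using trans unfolding transitive_on_def by blast
  show ?thesis
  proof (intro conjI impI)
    assume "\<forall>k. R (Xs k) Y"
    then have "R X' Y"
      using cont' R_trans[OF Xs'(1) Xs Y] Xs'(2) by blast
    then show "R X Y"
      using R_trans[OF X X'(1) Y] X'(2) by blast
  next
    assume "\<forall>k. R Y (Xs k)"
    then have "R Y X'"
      using cont' R_trans[OF Y Xs Xs'(1)] Xs'(2) by blast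
    then show "R Y X"
      using R_trans[OF Y X'(1) X] X'(2) by blast
  qed
qed

lemma cont_dist_pref_if_cont_prob_pref:
  assumes R: "complete_on (simpleL xl xu) R" "transitive_on (simpleL xl xu) R" "regret_based xl xu R"
    and cont: "cont_prob_pref xl xu R"
  shows "cont_dist_pref xl xu R"
  unfolding cont_dist_pref_def
proof (intro allI impI)
  fix Xs X Y
  assume Xs: "\<forall>k. Xs k \<in> simpleL xl xu" and X: "X \<in> simpleL xl xu" and Y: "Y \<in> simpleL xl xu"
    and "conv_in_dist Xs X"
  have Xs_L: "\<And>k. Xs k \<in> simpleL xl xu"
    using Xs by blast
  then have rvs: "\<And>k. finite_rv (Xs k)" "finite_rv X"
    using X simpleL_finite_rv by blast+
  then have "(\<lambda>k. rv_cdf (Xs k) t) \<longlonglongrightarrow> rv_cdf X t" if "t \<notin> X ` space PS" for t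
    using \<open>conv_in_dist Xs X\<close> isCont_rv_cdf[OF _ that]
    by (simp add: conv_in_dist_def weak_conv_m_def weak_conv_def cdf_law_eq_rv_cdf finite_rv_def)
  then have conv_rep: "conv_in_prob (\<lambda>k. quantile_rep (Xs k)) (quantile_rep X)"
    using rvs finite_rv_quantile_rep(1)
    by (intro conv_in_prob_if_AE_tendsto AE_tendsto_quantile_rep) (auto simp: finite_rv_def)
  note Xs_rep = indifferent_quantile_rep[OF R Xs_L]
    and X_rep = indifferent_quantile_rep[OF R X]
  have cont_rep: "((\<forall>k. R (quantile_rep (Xs k)) Y) \<longrightarrow> R (quantile_rep X) Y) \<and>
      ((\<forall>k. R Y (quantile_rep (Xs k))) \<longrightarrow> R Y (quantile_rep X))"
    using cont[unfolded cont_prob_pref_def, rule_format,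
        of "\<lambda>k. quantile_rep (Xs k)" "quantile_rep X" Y]
      Xs_rep(1) X_rep(1) Y conv_rep by blast
  show "((\<forall>k. R (Xs k) Y) \<longrightarrow> R X Y) \<and> ((\<forall>k. R Y (Xs k)) \<longrightarrow> R Y X)"
    by (rule sequential_continuity_transfer[where Xs' = "\<lambda>k. quantile_rep (Xs k)",
          OF R(2) Xs_L X Y Xs_rep X_rep cont_rep])
qed

theorem corollary1:
  fixes xl xu :: real
    and R :: "(real \<Rightarrow> real) \<Rightarrow> (real \<Rightarrow> real) \<Rightarrow> bool"
  assumes "complete_on (simpleL xl xu) R"
    and "transitive_on (simpleL xl xu) R"
    and "cont_prob_pref xl xu R"
    and "statewise_monotone xl xu R"
    and "regret_based xl xu R"
  shows "(\<forall>X\<in>simpleL xl xu. \<forall>Y\<in>simpleL xl xu. strict_fosd X Y \<longrightarrow> strict_pref R X Y)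
         \<and> cont_dist_pref xl xu R"
  using strict_pref_if_strict_fosd[OF assms(1,2,5,4)]
    cont_dist_pref_if_cont_prob_pref[OF assms(1,2,5,3)] by blast

end
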